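(* For $s\in\mathcal S^{2,2}$ write $V^n(s)=(x^{(n)},y^{(n)},u^{(n)},v^{(n)})$. Then: 1. $\frac{5}{12}\le x^{(2)}+y^{(2)}\le\frac12$ for every $s\in\mathcal S^{2,2}$; 2. there exists $\alpha\in(0,1)$ such that $v^{(n+1)}\le\alpha\,y^{(n)}$ for every $s\in\mathcal S^{2,2}$ and every $n\ge2$.
   Context: $\mathcal S^{2,2}=\{(x,y,u,v)\in\mathbb{R}^4: x,y,u,v\ge0,\ x+y+u+v=1,\ x+y>0,\ u+v>0\}$. $V:\mathcal S^{2,2}\to\mathcal S^{2,2}$ is $V(x,y,u,v)=(x',y',u',v')$ with $x'=\dfrac{2xu+yu}{4(x+y)(u+v)}$, $y'=\dfrac{6xv+3yu+4yv}{12(x+y)(u+v)}$, $u'=\dfrac{6xu+6xv+3yu+4yv}{12(x+y)(u+v)}$, $v'=\dfrac{3yu+4yv}{12(x+y)(u+v)}$. $V^n$ denotes the $n$-fold iterate. *)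

theory Defs
  imports Complex_Main
begin

definition S22 :: "(real \<times> real \<times> real \<times> real) set" where
  "S22 = {(x, y, u, v). x \<ge> 0 \<and> y \<ge> 0 \<and> u \<ge> 0 \<and> v \<ge> 0 \<and>
                         x + y + u + v = 1 \<and> x + y > 0 \<and> u + v > 0}"

definition V :: "real \<times> real \<times> real \<times> real \<Rightarrow> real \<times> real \<times> real \<times> real" where
  "V s = (case s of (x, y, u, v) \<Rightarrow>
     ((2*x*u + y*u) / (4*(x+y)*(u+v)),
      (6*x*v + 3*y*u + 4*y*v) / (12*(x+y)*(u+v)),
      (6*x*u + 6*x*v + 3*y*u + 4*y*v) / (12*(x+y)*(u+v)),
      (3*y*u + 4*y*v) / (12*(x+y)*(u+v))))"

definition cx :: "real \<times> real \<times> real \<times> real \<Rightarrow> real" where "cx s = fst s"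
definition cy :: "real \<times> real \<times> real \<times> real \<Rightarrow> real" where "cy s = fst (snd s)"
definition cu :: "real \<times> real \<times> real \<times> real \<Rightarrow> real" where "cu s = fst (snd (snd s))"
definition cv :: "real \<times> real \<times> real \<times> real \<Rightarrow> real" where "cv s = snd (snd (snd s))"

end

theory Submission
  imports Defs
begin

text \<open>
  The first-pair mass of the image is x' + y' = 1/2 - y v / (6 (x+y)(u+v)), so it is at most 1/2,
  and at least 1/2 - v/(6 (u+v)).  Since u' - v' = x/(2 (x+y)) \<ge> 0, after one step v \<le> (u+v)/2,
  which gives x + y \<ge> 5/12 after two steps.  Finally 3 (x+y) v' = y (3u + 4v)/(4 (u+v)) \<le> y, and
  combined with x + y \<ge> 5/12 this yields v' \<le> 4/5 y from the second step on.
\<close>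

lemma coords_tuple [simp]:
  "cx (x, y, u, v) = x" "cy (x, y, u, v) = y" "cu (x, y, u, v) = u" "cv (x, y, u, v) = v"
  by (simp_all add: cx_def cy_def cu_def cv_def)

lemma mem_S22_iff:
  "(x, y, u, v) \<in> S22 \<longleftrightarrow> x \<ge> 0 \<and> y \<ge> 0 \<and> u \<ge> 0 \<and> v \<ge> 0 \<and>
     x + y + u + v = 1 \<and> x + y > 0 \<and> u + v > 0"
  by (simp add: S22_def)

lemma V_coords_sum:
  assumes "x + y \<noteq> 0" "u + v \<noteq> 0"
  shows "cx (V (x, y, u, v)) + cy (V (x, y, u, v)) + cu (V (x, y, u, v)) + cv (V (x, y, u, v)) = 1"
proof -
  have "12*(x+y)*(u+v) \<noteq> 0" using assms by simp
  then show ?thesis unfolding V_def by (simp add: divide_simps) (simp add: algebra_simps)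
qed

lemma V_first_pair_eq:
  assumes "x + y \<noteq> 0" "u + v \<noteq> 0"
  shows "cx (V (x, y, u, v)) + cy (V (x, y, u, v)) = 1/2 - y*v / (6*(x+y)*(u+v))"
proof -
  have "(x+y)*(u+v) \<noteq> 0" using assms by simp
  then show ?thesis unfolding V_def by (simp add: divide_simps) (simp add: algebra_simps)
qed

lemma V_first_pair_le_half:
  assumes "s \<in> S22"
  shows "cx (V s) + cy (V s) \<le> 1/2"
proof -
  obtain x y u v where "s = (x, y, u, v)" by (cases s) auto
  with assms show ?thesis by (simp add: mem_S22_iff V_first_pair_eq)
qed

lemma V_first_pair_ge:
  assumes "s \<in> S22"
  shows "1/2 - cv s / (6*(cu s + cv s)) \<le> cx (V s) + cy (V s)"
proof -
  obtain x y u v where s: "s = (x, y, u, v)" by (cases s) auto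
  with assms have h: "x \<ge> 0" "y \<ge> 0" "v \<ge> 0" "x + y > 0" "u + v > 0"
    by (simp_all add: mem_S22_iff)
  have "y*v / (6*(x+y)*(u+v)) = (y / (x+y)) * (v / (6*(u+v)))" by (simp add: algebra_simps)
  also have "\<dots> \<le> v / (6*(u+v))"
    using h by (intro mult_left_le_one_le) auto
  finally show ?thesis using h s by (simp add: V_first_pair_eq)
qed

lemma V_in_S22:
  assumes "s \<in> S22"
  shows "V s \<in> S22"
proof -
  obtain x y u v where s: "s = (x, y, u, v)" by (cases s) auto
  with assms have h: "x \<ge> 0" "y \<ge> 0" "u \<ge> 0" "v \<ge> 0" "x + y > 0" "u + v > 0"
    by (simp_all add: mem_S22_iff)
  have "v / (6*(u+v)) \<le> 1/6"
    using h by (simp add: divide_le_eq)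
  then have "1/3 \<le> cx (V s) + cy (V s)"
    using V_first_pair_ge[OF assms] s by simp
  moreover have "cx (V s) + cy (V s) \<le> 1/2"
    using V_first_pair_le_half[OF assms] .
  moreover have "cx (V s) + cy (V s) + cu (V s) + cv (V s) = 1"
    using h s by (simp add: V_coords_sum)
  moreover have "cx (V s) \<ge> 0" "cy (V s) \<ge> 0" "cu (V s) \<ge> 0" "cv (V s) \<ge> 0"
    using h s by (simp_all add: V_def)
  ultimately show ?thesis
    by (cases "V s") (auto simp: mem_S22_iff)
qed

lemma funpow_V_in_S22: "s \<in> S22 \<Longrightarrow> (V ^^ n) s \<in> S22"
  by (induction n) (simp_all add: V_in_S22)

lemma S22_second_pair_pos: "s \<in> S22 \<Longrightarrow> 0 < cu s + cv s"
  and S22_cv_nonneg: "s \<in> S22 \<Longrightarrow> 0 \<le> cv s"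
  by (cases s, simp add: mem_S22_iff)+

lemma V_cv_le_half_second_pair:
  assumes "s \<in> S22"
  shows "2 * cv (V s) \<le> cu (V s) + cv (V s)"
proof -
  obtain x y u v where s: "s = (x, y, u, v)" by (cases s) auto
  with assms have "x \<ge> 0" "u \<ge> 0" "v \<ge> 0" "x + y > 0" "u + v > 0"
    by (simp_all add: mem_S22_iff)
  then show ?thesis using s by (simp add: V_def divide_simps)
qed

lemma V_cv_bound:
  assumes "s \<in> S22"
  shows "3*(cx s + cy s) * cv (V s) \<le> cy s"
proof -
  obtain x y u v where s: "s = (x, y, u, v)" by (cases s) auto
  with assms have h: "y \<ge> 0" "u \<ge> 0" "v \<ge> 0" "x + y > 0" "u + v > 0"
    by (simp_all add: mem_S22_iff)
  have "3*(x+y) * ((3*y*u + 4*y*v) / (12*(x+y)*(u+v))) = y * ((3*u + 4*v) / (4*(u+v)))"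
    using h by (simp add: divide_simps) (simp add: algebra_simps)
  also have "\<dots> \<le> y"
    using h by (intro mult_left_le) (simp_all add: divide_le_eq)
  finally show ?thesis using s by (simp add: V_def)
qed

lemma V2_first_pair_ge:
  assumes "s \<in> S22"
  shows "5/12 \<le> cx (V (V s)) + cy (V (V s))"
proof -
  have "cv (V s) / (6*(cu (V s) + cv (V s))) \<le> 1/12"
    using V_cv_le_half_second_pair[OF assms] S22_second_pair_pos[OF V_in_S22[OF assms]]
    by (simp add: divide_le_eq)
  then show ?thesis using V_first_pair_ge[OF V_in_S22[OF assms]] by linarith
qed

theorem lemma4p2:
  shows "(\<forall>s\<in>S22. 5/12 \<le> cx ((V ^^ 2) s) + cy ((V ^^ 2) s) \<and>
                    cx ((V ^^ 2) s) + cy ((V ^^ 2) s) \<le> 1/2) \<and>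
         (\<exists>\<alpha>::real. 0 < \<alpha> \<and> \<alpha> < 1 \<and>
            (\<forall>s\<in>S22. \<forall>n::nat. n \<ge> 2 \<longrightarrow>
               cv ((V ^^ (n+1)) s) \<le> \<alpha> * cy ((V ^^ n) s)))"
proof (intro conjI ballI exI[of _ "4/5"] allI impI)
  fix s assume s: "s \<in> S22"
  have "(V ^^ 2) s = V (V s)" by (simp add: numeral_2_eq_2)
  then show "5/12 \<le> cx ((V ^^ 2) s) + cy ((V ^^ 2) s)"
    and "cx ((V ^^ 2) s) + cy ((V ^^ 2) s) \<le> 1/2"
    using V2_first_pair_ge[OF s] V_first_pair_le_half[OF V_in_S22[OF s]] by simp_all
next
  fix s and n :: nat assume s: "s \<in> S22" and "2 \<le> n"
  define t where "t = (V ^^ n) s"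
  have t: "t \<in> S22" using funpow_V_in_S22[OF s] by (simp add: t_def)
  obtain k where "n = Suc (Suc k)" using \<open>2 \<le> n\<close> by (metis add_2_eq_Suc le_Suc_ex)
  then have "5/12 \<le> cx t + cy t"
    using V2_first_pair_ge[OF funpow_V_in_S22[OF s]] by (simp add: t_def)
  then have "3*(5/12) * cv (V t) \<le> 3*(cx t + cy t) * cv (V t)"
    using S22_cv_nonneg[OF V_in_S22[OF t]] by (intro mult_right_mono) auto
  also have "\<dots> \<le> cy t"
    using V_cv_bound[OF t] .
  finally show "cv ((V ^^ (n+1)) s) \<le> 4/5 * cy ((V ^^ n) s)" by (simp add: t_def)
qed simp_all

end
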